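(* Assume $\delta=d$, $\gamma\ge1$ and $\alpha\le0$ (including $\alpha=-\infty$). Then $G_z(w)=\lim_{n\to\infty}d^{-n}\log^+|Q_z^n(w)|$ exists (as a value in $[0,+\infty]$) on $A_p\times\mathbb{C}$; it equals $+\infty$ on $A_f$ and $0$ on $B_f$.
   Context: Let $p(z)=z^d+O(z^{d-1})$ be a monic polynomial of degree $\delta=d\ge 2$, and let $q(z,w)=b(z)w^d+(\text{terms of lower degree in } w)$ be a polynomial with $\deg_w q=d$, where $b$ is a monic polynomial of degree $\gamma$. Let $f(z,w)=(p(z),q(z,w))$. Write $Q_z^n=q_{p^{n-1}(z)}\circ\cdots\circ q_{p(z)}\circ q_z$ with $q_z=q(z,\cdot)$, so $f^n(z,w)=(p^n(z),Q_z^n(w))$. Let $A_p=\{z: p^n(z)\to\infty\}$. Define $\alpha=\max\{(n_j-\gamma)/(d-m_j)\}$ over monomials $z^{n_j}w^{m_j}$ appearing in $q$ with nonzero coefficient and $m_j<d$, and $\alpha=-\infty$ if $q=b(z)w^d$. Let $W_R=\{(z,w):|z|>R,\ |w|>R|z|^\alpha\}$ (if $\alpha=-\infty$: $\{|z|>R,\ w\ne0\}$), fix $R>1$ large enough that $f(W_R)\subset W_R$ and $W_R\subset A_p\times\mathbb{C}$, and set $A_f=\bigcup_{n\ge0}f^{-n}(W_R)$, $B_f=(A_p\times\mathbb{C})\setminus A_f$. *)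

theory Defs
  imports "HOL-Analysis.Analysis" "HOL-Computational_Algebra.Polynomial" "HOL-Library.Extended_Real"
begin

text \<open>A polynomial q(z,w) in two variables is represented as a polynomial in w whose
  coefficients are polynomials in z (type complex poly poly).\<close>

definition qeval :: "complex poly poly \<Rightarrow> complex \<Rightarrow> complex \<Rightarrow> complex" where
  "qeval q z w = poly (map_poly (\<lambda>a. poly a z) q) w"

definition skew :: "complex poly \<Rightarrow> complex poly poly \<Rightarrow> complex \<times> complex \<Rightarrow> complex \<times> complex" where
  "skew p q = (\<lambda>(z, w). (poly p z, qeval q z w))"

fun Qiter :: "complex poly \<Rightarrow> complex poly poly \<Rightarrow> complex \<Rightarrow> nat \<Rightarrow> complex \<Rightarrow> complex" where
  "Qiter p q z 0 w = w"
| "Qiter p q z (Suc n) w = qeval q (((poly p) ^^ n) z) (Qiter p q z n w)"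

definition escA :: "complex poly \<Rightarrow> complex set" where
  "escA p = {z. filterlim (\<lambda>n. ((poly p) ^^ n) z) at_infinity sequentially}"

definition lowmonos :: "complex poly poly \<Rightarrow> (nat \<times> nat) set" where
  "lowmonos q = {(n, m). m < degree q \<and> coeff (coeff q m) n \<noteq> 0}"

definition alpha :: "complex poly poly \<Rightarrow> ereal" where
  "alpha q = (if lowmonos q = {} then -\<infinity>
     else Max ((\<lambda>(n, m). ereal ((real n - real (degree (lead_coeff q))) / (real (degree q) - real m)))
               ` lowmonos q))"

definition WR :: "complex poly poly \<Rightarrow> real \<Rightarrow> (complex \<times> complex) set" where
  "WR q R = (if alpha q = -\<infinity> then {(z, w). norm z > R \<and> w \<noteq> 0}
     else {(z, w). norm z > R \<and> norm w > R * norm z powr real_of_ereal (alpha q)})"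

definition Af :: "complex poly \<Rightarrow> complex poly poly \<Rightarrow> real \<Rightarrow> (complex \<times> complex) set" where
  "Af p q R = (\<Union>n. ((skew p q) ^^ n) -` WR q R)"

definition Bf :: "complex poly \<Rightarrow> complex poly poly \<Rightarrow> real \<Rightarrow> (complex \<times> complex) set" where
  "Bf p q R = (escA p \<times> UNIV) - Af p q R"

definition logplus :: "real \<Rightarrow> real" where
  "logplus x = (if x \<le> 1 then 0 else ln x)"

end

theory Submission
  imports Defs
begin

text \<open>
  Two lower bounds drive the argument: a monic polynomial satisfies \<open>|P(z)| \<ge> |z|^deg P / 2\<close>
  for large \<open>|z|\<close>, and on \<open>W\<^sub>R\<close> every monomial \<open>z^n w^m\<close> of \<open>q\<close> with \<open>m < d\<close> is dominated
  by \<open>|z|^\<gamma> |w|^d / R\<close> (this is what the exponent \<open>\<alpha>\<close> measures), so that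
  \<open>|q(z,w)| \<ge> |z|^\<gamma> |w|^d / 4\<close> for large \<open>R\<close>.

  On an orbit that enters the forward invariant set \<open>W\<^sub>R\<close> (i.e. on \<open>A\<^sub>f\<close>) this yields
  \<open>log|z\<^sub>j| \<ge> 2 + d^j\<close> and then \<open>L\<^sub>j\<^sub>+\<^sub>1 \<ge> d L\<^sub>j + d^j\<close> for \<open>L\<^sub>j = log|w\<^sub>j|\<close>; solving this recursion
  shows that \<open>d\<^sup>-\<^sup>n log\<^sup>+|Q\<^sub>z\<^sup>n(w)|\<close> grows linearly in \<open>n\<close>, hence tends to \<open>\<infinity>\<close>.  On an orbit that
  never enters \<open>W\<^sub>R\<close> (i.e. on \<open>B\<^sub>f\<close>) the condition \<open>\<alpha> \<le> 0\<close> forces \<open>|Q\<^sub>z\<^sup>n(w)| \<le> R\<close> once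
  \<open>|p\<^sup>n(z)| > R\<close>, so the normalized quantity tends to \<open>0\<close>.  Since \<open>A\<^sub>p \<times> \<complex>\<close> is the union of
  \<open>A\<^sub>f\<close> and \<open>B\<^sub>f\<close>, the limit exists everywhere.
\<close>

lemma poly_eq_sum_upto:
  fixes P :: "'a::comm_semiring_1 poly"
  assumes "degree P \<le> N"
  shows "poly P x = (\<Sum>i\<le>N. coeff P i * x ^ i)"
proof -
  have "poly P x = (\<Sum>i\<le>degree P. coeff P i * x ^ i)" by (rule poly_altdef)
  also have "\<dots> = (\<Sum>i\<le>N. coeff P i * x ^ i)"
    by (rule sum.mono_neutral_left) (use assms in \<open>auto simp: coeff_eq_0\<close>)
  finally show ?thesis .
qed

lemma monic_poly_lower_bound:
  fixes P :: "'a::real_normed_field poly"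
  assumes monic: "lead_coeff P = 1"
  shows "\<exists>M\<ge>1. \<forall>z. M \<le> norm z \<longrightarrow> norm z ^ degree P / 2 \<le> norm (poly P z)"
proof (cases "degree P")
  case 0
  then have "P = 1" using monic by (metis degree_0_id one_pCons)
  then show ?thesis by (intro exI[of _ 1]) auto
next
  case (Suc k)
  define S where "S = (\<Sum>i\<le>k. norm (coeff P i))"
  have S0: "S \<ge> 0" unfolding S_def by (auto intro: sum_nonneg)
  show ?thesis
  proof (intro exI[of _ "2 * S + 1"] conjI allI impI)
    fix z :: 'a assume z: "2 * S + 1 \<le> norm z"
    have "poly P z = (\<Sum>i\<le>Suc k. coeff P i * z ^ i)"
      using Suc by (simp add: poly_altdef)
    also have "\<dots> = (\<Sum>i\<le>k. coeff P i * z ^ i) + z ^ Suc k"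
      using Suc monic by simp
    finally have eq: "poly P z = (\<Sum>i\<le>k. coeff P i * z ^ i) + z ^ Suc k" .
    have "norm (z ^ Suc k) - norm (\<Sum>i\<le>k. coeff P i * z ^ i) \<le> norm (poly P z)"
      unfolding eq using norm_triangle_ineq2[of "z ^ Suc k" "- (\<Sum>i\<le>k. coeff P i * z ^ i)"]
      by (simp add: add.commute)
    moreover have "norm (\<Sum>i\<le>k. coeff P i * z ^ i) \<le> S * norm z ^ k"
    proof -
      have "norm (\<Sum>i\<le>k. coeff P i * z ^ i) \<le> (\<Sum>i\<le>k. norm (coeff P i) * norm z ^ k)"
        using z S0 by (intro order_trans[OF norm_sum] sum_mono)
          (auto simp: norm_mult norm_power intro!: mult_left_mono power_increasing)
      then show ?thesis by (simp add: S_def sum_distrib_right)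
    qed
    moreover have "S * norm z ^ k \<le> norm z / 2 * norm z ^ k"
      using z by (intro mult_right_mono) auto
    ultimately show "norm z ^ degree P / 2 \<le> norm (poly P z)"
      using Suc by (simp add: norm_mult norm_power)
  qed (use S0 in simp)
qed

lemma qeval_split:
  "qeval q z w = (\<Sum>m<degree q. poly (coeff q m) z * w ^ m) + poly (lead_coeff q) z * w ^ degree q"
proof -
  have "qeval q z w = (\<Sum>m\<le>degree q. coeff (map_poly (\<lambda>a. poly a z) q) m * w ^ m)"
    unfolding qeval_def by (rule poly_eq_sum_upto) (rule map_poly_degree_leq)
  also have "\<dots> = (\<Sum>m\<le>degree q. poly (coeff q m) z * w ^ m)"
    by (simp add: coeff_map_poly)
  also have "\<dots> = (\<Sum>m<degree q. poly (coeff q m) z * w ^ m) + poly (lead_coeff q) z * w ^ degree q"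
    by (simp add: lessThan_Suc_atMost[symmetric])
  finally show ?thesis .
qed

lemma finite_lowmonos: "finite (lowmonos q)"
proof (rule finite_subset)
  define N where "N = Max ((\<lambda>m. degree (coeff q m)) ` {..<degree q})"
  show "lowmonos q \<subseteq> {..N} \<times> {..<degree q}"
  proof
    fix x assume "x \<in> lowmonos q"
    then obtain n m where x: "x = (n, m)" and m: "m < degree q" and c: "coeff (coeff q m) n \<noteq> 0"
      unfolding lowmonos_def by auto
    have "n \<le> degree (coeff q m)" using c le_degree by blast
    also have "\<dots> \<le> N" unfolding N_def using m by (intro Max_ge) auto
    finally show "x \<in> {..N} \<times> {..<degree q}" using x m by simp
  qed
qed simp

lemma alpha_lowmono:
  assumes "(n, m) \<in> lowmonos q"
  shows "alpha q = ereal (real_of_ereal (alpha q))"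
    and "(real n - real (degree (lead_coeff q))) / (real (degree q) - real m) \<le> real_of_ereal (alpha q)"
proof -
  define e where "e = (\<lambda>(n, m). ereal ((real n - real (degree (lead_coeff q))) / (real (degree q) - real m)))"
  have ne: "lowmonos q \<noteq> {}" using assms by auto
  then have alpha: "alpha q = Max (e ` lowmonos q)"
    unfolding alpha_def e_def by simp
  have "Max (e ` lowmonos q) \<in> e ` lowmonos q"
    using ne finite_lowmonos by (intro Max_in) auto
  then show fin: "alpha q = ereal (real_of_ereal (alpha q))"
    unfolding alpha e_def by auto
  have "e (n, m) \<le> alpha q"
    unfolding alpha using assms finite_lowmonos by (intro Max_ge) auto
  then show "(real n - real (degree (lead_coeff q))) / (real (degree q) - real m) \<le> real_of_ereal (alpha q)"
    using fin unfolding e_def by (metis case_prod_conv ereal_less_eq(3))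
qed

lemma monomial_dominated:
  fixes R x y a :: real and n m D g :: nat
  assumes R1: "1 \<le> R" and Rx: "R < x" and y: "R * x powr a < y"
    and slope: "(real n - real g) / (real D - real m) \<le> a" and mD: "m < D"
  shows "x ^ n * y ^ m * R \<le> x ^ g * y ^ D"
proof -
  have x0: "x > 0" using R1 Rx by auto
  have pa: "x powr a > 0" using x0 by simp
  have y0: "y > 0" using y R1 pa by (smt (verit) mult_pos_pos)
  define k where "k = D - m"
  have k1: "k \<ge> 1" and Dk: "D = m + k" using mD k_def by auto
  have slope': "real n - real g \<le> a * real k"
    using slope mD k_def by (simp add: divide_le_eq of_nat_diff mult.commute)
  have "R * x powr (real n - real g) \<le> R ^ k * x powr (a * real k)"
    using R1 Rx k1 slope' by (intro mult_mono powr_mono)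
      (auto simp: power_increasing[of 1 k R, simplified])
  also have "\<dots> = (R * x powr a) ^ k"
    using x0 by (simp add: power_mult_distrib powr_realpow[symmetric] powr_powr)
  also have "\<dots> \<le> y ^ k"
    by (rule power_mono) (use y R1 pa in auto)
  finally have key: "R * x powr (real n - real g) \<le> y ^ k" .
  have "x ^ n * y ^ m * R = x powr real g * y ^ m * (R * x powr (real n - real g))"
    using x0 by (simp add: powr_realpow[symmetric] powr_diff field_simps)
  also have "\<dots> \<le> x powr real g * y ^ m * y ^ k"
    by (rule mult_left_mono[OF key]) (use x0 y0 in auto)
  also have "\<dots> = x ^ g * y ^ D" using x0 by (simp add: Dk power_add powr_realpow)
  finally show ?thesis .
qed

lemma WR_norm_gt: "(z, w) \<in> WR q R \<Longrightarrow> norm z > R"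
  by (auto simp: WR_def split: if_splits)

lemma WR_nonzero: "(z, w) \<in> WR q R \<Longrightarrow> R \<ge> 0 \<Longrightarrow> w \<noteq> 0"
  by (auto simp: WR_def split: if_splits) (smt (verit) norm_zero powr_gt_zero mult_nonneg_nonneg)

lemma lowmono_dominated_on_WR:
  assumes W: "(z, w) \<in> WR q R" and R1: "R \<ge> 1" and mono: "(n, m) \<in> lowmonos q"
  shows "norm z ^ n * norm w ^ m * R \<le> norm z ^ degree (lead_coeff q) * norm w ^ degree q"
proof (rule monomial_dominated[OF R1 WR_norm_gt[OF W]])
  define a where "a = real_of_ereal (alpha q)"
  have fin: "alpha q = ereal a" using alpha_lowmono(1)[OF mono] unfolding a_def .
  then show "R * norm z powr a < norm w" using W unfolding WR_def by auto
  show "(real n - real (degree (lead_coeff q))) / (real (degree q) - real m) \<le> a"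
    using alpha_lowmono(2)[OF mono] unfolding a_def .
  show "m < degree q" using mono unfolding lowmonos_def by simp
qed

definition low_coeff_mass :: "complex poly poly \<Rightarrow> real" where
  "low_coeff_mass q = (\<Sum>m<degree q. \<Sum>n\<le>degree (coeff q m). norm (coeff (coeff q m) n))"

lemma low_coeff_mass_nonneg: "low_coeff_mass q \<ge> 0"
  unfolding low_coeff_mass_def by (intro sum_nonneg) auto

lemma low_order_part_bound:
  assumes W: "(z, w) \<in> WR q R" and R1: "R \<ge> 1"
  defines "X \<equiv> norm z ^ degree (lead_coeff q) * norm w ^ degree q"
  shows "norm (\<Sum>m<degree q. poly (coeff q m) z * w ^ m) \<le> low_coeff_mass q * (X / R)"
proof -
  have term_bound: "norm (coeff (coeff q m) n * z ^ n * w ^ m) \<le> norm (coeff (coeff q m) n) * (X / R)"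
    if m: "m < degree q" for m n
  proof (cases "coeff (coeff q m) n = 0")
    case False
    then have "(n, m) \<in> lowmonos q" using m unfolding lowmonos_def by auto
    then have "norm z ^ n * norm w ^ m \<le> X / R"
      using lowmono_dominated_on_WR[OF W R1] R1 unfolding X_def by (simp add: le_divide_eq)
    then have "norm (coeff (coeff q m) n) * (norm z ^ n * norm w ^ m)
        \<le> norm (coeff (coeff q m) n) * (X / R)"
      by (rule mult_left_mono) simp
    then show ?thesis by (simp add: norm_mult norm_power mult.assoc)
  qed simp
  have "norm (\<Sum>m<degree q. poly (coeff q m) z * w ^ m)
      = norm (\<Sum>m<degree q. \<Sum>n\<le>degree (coeff q m). coeff (coeff q m) n * z ^ n * w ^ m)"
    by (simp add: poly_altdef sum_distrib_right)
  also have "\<dots> \<le> (\<Sum>m<degree q. \<Sum>n\<le>degree (coeff q m). norm (coeff (coeff q m) n) * (X / R))"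
    by (intro order_trans[OF norm_sum] sum_mono order_trans[OF norm_sum] term_bound) auto
  also have "\<dots> = low_coeff_mass q * (X / R)"
    unfolding low_coeff_mass_def by (simp add: sum_distrib_right sum_divide_distrib)
  finally show ?thesis .
qed

lemma qeval_lower_bound:
  assumes monic: "lead_coeff (lead_coeff q) = 1"
  shows "\<exists>M\<ge>1. \<forall>R z w. M \<le> R \<longrightarrow> (z, w) \<in> WR q R \<longrightarrow>
     norm z ^ degree (lead_coeff q) * norm w ^ degree q / 4 \<le> norm (qeval q z w)"
proof -
  obtain Mb where Mb: "Mb \<ge> 1"
    "\<And>z. Mb \<le> norm z \<Longrightarrow> norm z ^ degree (lead_coeff q) / 2 \<le> norm (poly (lead_coeff q) z)"
    using monic_poly_lower_bound[OF monic] by auto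
  define S where "S = low_coeff_mass q"
  show ?thesis
  proof (intro exI[of _ "max Mb (4 * S + 1)"] conjI allI impI)
    fix R z w assume R: "max Mb (4 * S + 1) \<le> R" and W: "(z, w) \<in> WR q R"
    define X where "X = norm z ^ degree (lead_coeff q) * norm w ^ degree q"
    have R1: "R \<ge> 1" using R Mb by simp
    have low: "norm (\<Sum>m<degree q. poly (coeff q m) z * w ^ m) \<le> X / 4"
    proof -
      have "S * (X / R) = (S / R) * X" by simp
      also have "\<dots> \<le> (1 / 4) * X"
        using R R1 low_coeff_mass_nonneg[of q]
        by (intro mult_right_mono) (auto simp: S_def X_def divide_le_eq)
      finally have "S * (X / R) \<le> X / 4" by simp
      moreover have "norm (\<Sum>m<degree q. poly (coeff q m) z * w ^ m) \<le> S * (X / R)"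
        using low_order_part_bound[OF W R1] unfolding S_def X_def .
      ultimately show ?thesis by linarith
    qed
    have top: "X / 2 \<le> norm (poly (lead_coeff q) z * w ^ degree q)"
    proof -
      have "norm z ^ degree (lead_coeff q) / 2 \<le> norm (poly (lead_coeff q) z)"
        using Mb(2) WR_norm_gt[OF W] R by auto
      then have "norm z ^ degree (lead_coeff q) / 2 * norm w ^ degree q
          \<le> norm (poly (lead_coeff q) z) * norm w ^ degree q"
        by (rule mult_right_mono) simp
      then show ?thesis unfolding X_def by (simp add: norm_mult norm_power)
    qed
    have "norm (poly (lead_coeff q) z * w ^ degree q) - norm (\<Sum>m<degree q. poly (coeff q m) z * w ^ m)
        \<le> norm (qeval q z w)"
      unfolding qeval_split[of q z w]
      using norm_triangle_ineq2[of "poly (lead_coeff q) z * w ^ degree q"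
          "- (\<Sum>m<degree q. poly (coeff q m) z * w ^ m)"]
      by (simp add: add.commute)
    with low top show "X / 4 \<le> norm (qeval q z w)" by linarith
  qed (use Mb in simp)
qed

lemma escaping_log_growth:
  fixes x :: "nat \<Rightarrow> real" and d :: nat
  assumes d2: "d \<ge> 2" and pos: "\<And>j. x j > 0" and start: "exp 3 \<le> x 0"
    and step: "\<And>j. x j ^ d / 2 \<le> x (Suc j)"
  shows "2 + real d ^ j \<le> ln (x j)"
proof (induction j)
  case 0
  have "ln (exp 3) \<le> ln (x 0)" using start pos[of 0] by (intro ln_mono) auto
  then show ?case by simp
next
  case (Suc j)
  have "real d * ln (x j) - ln 2 = ln (x j ^ d / 2)"
    using pos[of j] by (simp add: ln_div ln_realpow)
  also have "\<dots> \<le> ln (x (Suc j))"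
    using pos[of j] step[of j] by (intro ln_mono) auto
  finally have "real d * ln (x j) - ln 2 \<le> ln (x (Suc j))" .
  moreover have "real d * (2 + real d ^ j) \<le> real d * ln (x j)"
    using Suc by (intro mult_left_mono) auto
  moreover have "ln (2::real) \<le> 1" using ln_2_less_1 by simp
  moreover have "real d * (2 + real d ^ j) = 2 * real d + real d ^ Suc j"
    by (simp add: algebra_simps)
  ultimately show ?case using d2 by linarith
qed

lemma defect_recursion_lower_bound:
  fixes L :: "nat \<Rightarrow> real" and d :: real
  assumes d: "d > 0" and step: "\<And>j. d * L j + d ^ j \<le> L (Suc j)"
  shows "d ^ j * (L 0 + real j / d) \<le> L j"
proof (induction j)
  case (Suc j)
  have "d ^ Suc j * (L 0 + real (Suc j) / d) = d * (d ^ j * (L 0 + real j / d)) + d ^ j"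
    using d by (simp add: field_simps)
  also have "\<dots> \<le> d * L j + d ^ j"
    using Suc d by simp
  also have "\<dots> \<le> L (Suc j)" by (rule step)
  finally show ?case .
qed simp

lemma normalized_tendsto_infinity:
  fixes h :: "nat \<Rightarrow> real" and d c :: real
  assumes d: "d > 0" and lower: "\<And>j. d ^ j * (c + real j / d) \<le> h (n + j)"
  shows "(\<lambda>k. ereal (h k / d ^ k)) \<longlonglongrightarrow> \<infinity>"
proof -
  have bound: "c / d ^ n + real j * (1 / (d * d ^ n)) \<le> h (j + n) / d ^ (j + n)" for j
  proof -
    have "c / d ^ n + real j * (1 / (d * d ^ n)) = d ^ j * (c + real j / d) / d ^ (n + j)"
      using d by (simp add: power_add field_simps)
    also have "\<dots> \<le> h (j + n) / d ^ (j + n)"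
      using lower[of j] d by (simp add: add.commute divide_right_mono)
    finally show ?thesis .
  qed
  have "filterlim (\<lambda>j. c / d ^ n + real j * (1 / (d * d ^ n))) at_top sequentially"
    by (intro filterlim_tendsto_add_at_top[OF tendsto_const]
        filterlim_at_top_mult_tendsto_pos[OF tendsto_const])
      (use d in \<open>auto intro: filterlim_real_sequentially\<close>)
  then have "filterlim (\<lambda>j. h (j + n) / d ^ (j + n)) at_top sequentially"
    by (rule filterlim_at_top_mono) (use bound in auto)
  then have "(\<lambda>j. ereal (h (j + n) / d ^ (j + n))) \<longlonglongrightarrow> \<infinity>"
    by (simp add: tendsto_PInfty_eq_at_top)
  then show ?thesis by (rule LIMSEQ_offset)
qed

lemma normalized_tendsto_zero:
  fixes h :: "nat \<Rightarrow> real" and d B :: real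
  assumes d: "d > 1" and bounded: "eventually (\<lambda>k. 0 \<le> h k \<and> h k \<le> B) sequentially"
  shows "(\<lambda>k. ereal (h k / d ^ k)) \<longlonglongrightarrow> 0"
proof -
  have lim: "(\<lambda>k. B * inverse (d ^ k)) \<longlonglongrightarrow> 0"
    by (rule tendsto_mult_right_zero) (rule LIMSEQ_inverse_realpow_zero[OF d])
  have lo: "eventually (\<lambda>k. 0 \<le> h k / d ^ k) sequentially"
    using bounded by eventually_elim (use d in auto)
  have hi: "eventually (\<lambda>k. h k / d ^ k \<le> B * inverse (d ^ k)) sequentially"
    using bounded by eventually_elim (use d in \<open>auto simp: divide_right_mono divide_inverse[symmetric]\<close>)
  have "(\<lambda>k. h k / d ^ k) \<longlonglongrightarrow> 0"
    by (rule tendsto_sandwich[OF lo hi tendsto_const lim])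
  then have "(\<lambda>k. ereal (h k / d ^ k)) \<longlonglongrightarrow> ereal 0"
    by (rule tendsto_ereal)
  then show ?thesis by (simp add: zero_ereal_def)
qed

lemma skew_iter: "(skew p q ^^ k) (z, w) = ((poly p ^^ k) z, Qiter p q z k w)"
  by (induction k) (auto simp: skew_def)

lemma WR_orbit:
  assumes inv: "skew p q ` WR q R \<subseteq> WR q R"
    and W: "(skew p q ^^ n) (z, w) \<in> WR q R"
  shows "((poly p ^^ (n + j)) z, Qiter p q z (n + j) w) \<in> WR q R"
proof (induction j)
  case 0
  then show ?case using W by (simp add: skew_iter)
next
  case (Suc j)
  then have "skew p q ((poly p ^^ (n + j)) z, Qiter p q z (n + j) w) \<in> WR q R"
    using inv by blast
  then show ?case by (simp add: skew_def)
qed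

lemma outside_WR_bounded:
  assumes al: "alpha q \<le> 0" and R1: "R \<ge> 1"
    and zR: "norm z > R" and notW: "(z, w) \<notin> WR q R"
  shows "norm w \<le> R"
proof (cases "alpha q = -\<infinity>")
  case True
  then show ?thesis using notW zR R1 unfolding WR_def by auto
next
  case False
  define a where "a = real_of_ereal (alpha q)"
  have a: "alpha q = ereal a" "a \<le> 0"
    using False al unfolding a_def by (cases "alpha q"; auto)+
  have "norm w \<le> R * norm z powr a"
    using notW zR False a unfolding WR_def by auto
  also have "\<dots> \<le> R * norm z powr 0"
    using zR R1 a by (intro mult_left_mono powr_mono) auto
  also have "\<dots> = R"
  proof -
    have "z \<noteq> 0" using zR R1 by auto
    then show ?thesis by simp
  qed
  finally show ?thesis .
qed

lemma logplus_nonneg: "logplus x \<ge> 0"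
  unfolding logplus_def by auto

lemma logplus_ge_ln: "x > 0 \<Longrightarrow> ln x \<le> logplus x"
  unfolding logplus_def by auto

lemma logplus_mono: "x \<le> y \<Longrightarrow> logplus x \<le> logplus y"
  unfolding logplus_def by auto

text \<open>One step of the fibre recursion in logarithmic form: if \<open>y' \<ge> x^g y^d / 4\<close> with
  \<open>g \<ge> 1\<close> and \<open>log x \<ge> 2 + t\<close>, then \<open>log y' \<ge> d log y + t\<close> (the factor \<open>1/4\<close> is absorbed
  by the surplus \<open>2 \<ge> log 4\<close>).\<close>

lemma log_step_lower_bound:
  fixes x y y' t :: real and g d :: nat
  assumes pos: "x > 0" "y > 0" and g1: "g \<ge> 1" and t: "t \<ge> 0"
    and big: "2 + t \<le> ln x" and lower: "x ^ g * y ^ d / 4 \<le> y'"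
  shows "real d * ln y + t \<le> ln y'"
proof -
  have "real g * ln x + real d * ln y - ln 4 = ln (x ^ g * y ^ d / 4)"
    using pos by (simp add: ln_div ln_mult ln_realpow)
  also have "\<dots> \<le> ln y'"
    using pos lower by (intro ln_mono) auto
  finally have "real g * ln x + real d * ln y - ln 4 \<le> ln y'" .
  moreover have "ln x \<le> real g * ln x"
    using g1 big t mult_right_mono[of 1 "real g" "ln x"] by simp
  moreover have "ln (4::real) \<le> 2"
    using ln_realpow[of 2 2] ln_2_less_1 by simp
  ultimately show ?thesis using big by linarith
qed

text \<open>The escape rate is infinite on \<open>A\<^sub>f\<close>: once the orbit is in \<open>W\<^sub>R\<close>, the base grows as
  \<open>log|z\<^sub>j| \<ge> 2 + d^j\<close>, which feeds the defect term of the fibre recursion (this uses \<open>\<gamma> \<ge> 1\<close>).\<close>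

lemma escape_rate_infinite:
  fixes p :: "complex poly" and q :: "complex poly poly" and d :: nat
  assumes d2: "d \<ge> 2" and g1: "degree (lead_coeff q) \<ge> 1"
    and p_bound: "\<And>z. Mp \<le> norm z \<Longrightarrow> norm z ^ d / 2 \<le> norm (poly p z)"
    and q_bound: "\<And>z w. (z, w) \<in> WR q R \<Longrightarrow>
        norm z ^ degree (lead_coeff q) * norm w ^ d / 4 \<le> norm (qeval q z w)"
    and R: "Mp \<le> R" "exp 3 \<le> R"
    and inv: "skew p q ` WR q R \<subseteq> WR q R"
    and W: "(skew p q ^^ n) (z, w) \<in> WR q R"
  shows "(\<lambda>k. ereal (logplus (norm (Qiter p q z k w)) / real d ^ k)) \<longlonglongrightarrow> \<infinity>"
proof -
  define zk where "zk j = (poly p ^^ (n + j)) z" for j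
  define wk where "wk j = Qiter p q z (n + j) w" for j
  define L where "L j = ln (norm (wk j))" for j
  have inW: "(zk j, wk j) \<in> WR q R" for j
    unfolding zk_def wk_def by (rule WR_orbit[OF inv W])
  have R_pos: "R > 0" using R(2) by (smt (verit) exp_gt_zero)
  have zR: "norm (zk j) > R" for j using WR_norm_gt[OF inW] .
  have zpos: "norm (zk j) > 0" for j using zR[of j] R_pos by linarith
  have wpos: "norm (wk j) > 0" for j using WR_nonzero[OF inW] R_pos by simp
  have l_ge: "2 + real d ^ j \<le> ln (norm (zk j))" for j
  proof (rule escaping_log_growth[OF d2 zpos])
    show "exp 3 \<le> norm (zk 0)" using zR[of 0] R(2) by linarith
    show "norm (zk j) ^ d / 2 \<le> norm (zk (Suc j))" for j
      using p_bound[of "zk j"] zR[of j] R(1) by (simp add: zk_def)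
  qed
  have L_step: "real d * L j + real d ^ j \<le> L (Suc j)" for j
    unfolding L_def
  proof (rule log_step_lower_bound[OF zpos wpos g1 _ l_ge])
    show "norm (zk j) ^ degree (lead_coeff q) * norm (wk j) ^ d / 4 \<le> norm (wk (Suc j))"
      using q_bound[OF inW[of j]] by (simp add: zk_def wk_def)
  qed simp
  show ?thesis
  proof (rule normalized_tendsto_infinity)
    show "real d > 0" using d2 by simp
    show "real d ^ j * (L 0 + real j / real d) \<le> logplus (norm (Qiter p q z (n + j) w))" for j
      using defect_recursion_lower_bound[of "real d" L j] L_step d2 logplus_ge_ln[OF wpos[of j]]
      by (simp add: L_def wk_def)
  qed
qed

text \<open>The escape rate vanishes on \<open>B\<^sub>f\<close>: the base point escapes, so eventually \<open>|p\<^sup>k(z)| > R\<close>,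
  and since the orbit avoids \<open>W\<^sub>R\<close> the fibre coordinate stays bounded by \<open>R\<close>.\<close>

lemma escape_rate_zero:
  fixes p :: "complex poly" and q :: "complex poly poly" and d :: nat
  assumes d2: "d \<ge> 2" and al: "alpha q \<le> 0" and R1: "R \<ge> 1"
    and esc: "z \<in> escA p"
    and notW: "\<And>n. (skew p q ^^ n) (z, w) \<notin> WR q R"
  shows "(\<lambda>k. ereal (logplus (norm (Qiter p q z k w)) / real d ^ k)) \<longlonglongrightarrow> 0"
proof (rule normalized_tendsto_zero)
  show "real d > 1" using d2 by simp
  have "filterlim (\<lambda>n. norm ((poly p ^^ n) z)) at_top sequentially"
    using esc unfolding escA_def by (intro filterlim_at_infinity_imp_norm_at_top) simp
  then have "eventually (\<lambda>n. norm ((poly p ^^ n) z) > R) sequentially"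
    by (simp add: filterlim_at_top_dense)
  then show "eventually (\<lambda>k. 0 \<le> logplus (norm (Qiter p q z k w))
      \<and> logplus (norm (Qiter p q z k w)) \<le> logplus R) sequentially"
  proof eventually_elim
    case (elim k)
    have "norm (Qiter p q z k w) \<le> R"
      using outside_WR_bounded[OF al R1 elim] notW[of k] by (simp add: skew_iter)
    then show ?case by (simp add: logplus_nonneg logplus_mono)
  qed
qed

theorem theorem6p7:
  fixes p :: "complex poly" and q :: "complex poly poly" and d :: nat
  assumes "d \<ge> 2"
    and "degree p = d" and "lead_coeff p = 1"
    and "degree q = d"
    and "lead_coeff (lead_coeff q) = 1"
    and "degree (lead_coeff q) \<ge> 1"
    and "alpha q \<le> 0"
  shows "\<exists>R0>1. \<forall>R\<ge>R0.
           skew p q ` WR q R \<subseteq> WR q R \<longrightarrow> WR q R \<subseteq> escA p \<times> UNIV \<longrightarrow>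
           (\<forall>z w. (z, w) \<in> escA p \<times> UNIV \<longrightarrow>
              (\<exists>G :: ereal. (\<lambda>n. ereal (logplus (norm (Qiter p q z n w)) / real d ^ n)) \<longlonglongrightarrow> G)) \<and>
           (\<forall>z w. (z, w) \<in> Af p q R \<longrightarrow>
              (\<lambda>n. ereal (logplus (norm (Qiter p q z n w)) / real d ^ n)) \<longlonglongrightarrow> \<infinity>) \<and>
           (\<forall>z w. (z, w) \<in> Bf p q R \<longrightarrow>
              (\<lambda>n. ereal (logplus (norm (Qiter p q z n w)) / real d ^ n)) \<longlonglongrightarrow> 0)"
proof -
  obtain Mp where p_bound: "\<And>z. Mp \<le> norm z \<Longrightarrow> norm z ^ d / 2 \<le> norm (poly p z)"
    using monic_poly_lower_bound[OF assms(3)] assms(2) by auto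
  obtain Mq where q_bound: "\<And>R z w. Mq \<le> R \<Longrightarrow> (z, w) \<in> WR q R \<Longrightarrow>
      norm z ^ degree (lead_coeff q) * norm w ^ d / 4 \<le> norm (qeval q z w)"
    using qeval_lower_bound[OF assms(5)] assms(4) by auto
  define R0 where "R0 = max (max Mp Mq) (exp 3)"
  have "R0 > 1" unfolding R0_def by (smt (verit) one_less_exp_iff)
  have infinite: "(\<lambda>n. ereal (logplus (norm (Qiter p q z n w)) / real d ^ n)) \<longlonglongrightarrow> \<infinity>"
    if R: "R0 \<le> R" and inv: "skew p q ` WR q R \<subseteq> WR q R" and A: "(z, w) \<in> Af p q R" for R z w
  proof -
    obtain n where W: "(skew p q ^^ n) (z, w) \<in> WR q R" using A unfolding Af_def by auto
    have bounds: "Mp \<le> R" "Mq \<le> R" "exp 3 \<le> R" using R unfolding R0_def by auto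
    show ?thesis
      by (rule escape_rate_infinite[OF assms(1,6) p_bound q_bound[OF bounds(2)] bounds(1,3) inv W])
  qed
  have zero: "(\<lambda>n. ereal (logplus (norm (Qiter p q z n w)) / real d ^ n)) \<longlonglongrightarrow> 0"
    if "R0 \<le> R" "(z, w) \<in> Bf p q R" for R z w
    using that escape_rate_zero[OF assms(1,7), of R z p w] \<open>R0 > 1\<close>
    unfolding Bf_def Af_def by auto
  show ?thesis
  proof (intro exI[of _ R0] conjI allI impI)
    fix R and z w :: complex
    assume R: "R0 \<le> R" and inv: "skew p q ` WR q R \<subseteq> WR q R" and esc: "(z, w) \<in> escA p \<times> UNIV"
    show "\<exists>G :: ereal. (\<lambda>n. ereal (logplus (norm (Qiter p q z n w)) / real d ^ n)) \<longlonglongrightarrow> G"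
    proof (cases "(z, w) \<in> Af p q R")
      case True
      then show ?thesis using infinite[OF R inv] by blast
    next
      case False
      then have "(z, w) \<in> Bf p q R" using esc unfolding Bf_def by blast
      then show ?thesis using zero[OF R] by blast
    qed
  qed (use \<open>R0 > 1\<close> in \<open>blast intro: infinite zero\<close>)+
qed

end
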